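(* Let $X$ be a regular Hausdorff space. If $X$ contains a closed subspace homeomorphic to the Arens space $S_2$, then $\mathcal{K}(X)$ contains a closed subspace homeomorphic to the sequential fan $S_\omega$.
   Context: $\mathcal{K}(X)$ is the set of nonempty compact subsets of $X$ with the Vietoris topology (base: $\langle U_1,\dots,U_k\rangle=\{K: K\subset\bigcup_i U_i,\ K\cap U_j\neq\emptyset\ \forall j\}$, $U_i$ open in $X$). The sequential fan $S_\omega$ is obtained from the topological sum of countably many convergent sequences $T_n\cup\{x_n\}$ ($T_n$ converging to $x_n$), $n\in\omega$, by identifying all $x_n$ to one point. The Arens space $S_2$ is $\{\infty\}\cup\{x_n:n\in\mathbb{N}\}\cup\{x_{n,m}\}$ with each $x_{n,m}$ isolated, basic neighborhoods of $x_n$ being $\{x_n\}\cup\{x_{n,m}: m>k\}$, and basic neighborhoods of $\infty$ being $\{\infty\}\cup\bigcup_{n>k}V_n$ with $V_n$ a neighborhood of $x_n$. *)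

theory Defs
  imports "HOL-Analysis.Analysis"
begin

definition vietoris_basic :: "'a topology \<Rightarrow> 'a set list \<Rightarrow> 'a set set" where
  "vietoris_basic X Us =
     {K. K \<noteq> {} \<and> compactin X K \<and> K \<subseteq> \<Union>(set Us) \<and> (\<forall>U\<in>set Us. K \<inter> U \<noteq> {})}"

definition vietoris :: "'a topology \<Rightarrow> 'a set topology" where
  "vietoris X = topology_generated_by
     {vietoris_basic X Us | Us. \<forall>U\<in>set Us. openin X U}"

text \<open>Sequential fan: None is the identified limit point; Some (n,m) is the m-th
  point of the n-th sequence T_n. This is the quotient topology of the sum of the
  convergent sequences, written out explicitly.\<close>
definition seq_fan :: "(nat \<times> nat) option topology" where
  "seq_fan = topology (\<lambda>U. None \<in> U \<longrightarrow>
      (\<forall>n. eventually (\<lambda>m. Some (n, m) \<in> U) sequentially))"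

text \<open>Arens space: None is \<infinity>, Some (n, None) is x_n, Some (n, Some m) is x_{n,m}.\<close>
definition arens_space :: "(nat \<times> nat option) option topology" where
  "arens_space = topology (\<lambda>U.
      (\<forall>n. Some (n, None) \<in> U \<longrightarrow> eventually (\<lambda>m. Some (n, Some m) \<in> U) sequentially) \<and>
      (None \<in> U \<longrightarrow> eventually (\<lambda>n. Some (n, None) \<in> U) sequentially))"

end

theory Submission
  imports Defs
begin

(* In the Arens space, the spine T formed by the point at infinity and the points x_n is a
   convergent sequence together with its limit, hence compact. The hyperspace points T and
   insert x_(n,m) T form a copy of the sequential fan with apex T: insert x_(n,m) T tends to T
   as m grows because x_(n,m) tends to x_n, which lies in T; conversely, the Vietoris neighbourhood of T
   avoiding finitely many points of every column shows that the fan topology at the apex is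
   not finer. The copy is closed since the Arens space is T1 and the points off the spine are
   isolated. Finally, K(S) is the subspace {K. K <= S} of K(X), closed when S is, so the hyperspace
   functor carries the closed copy of the Arens space in X to a closed copy of its hyperspace
   in K(X). *)

section \<open>The Vietoris hyperspace\<close>

lemma topspace_vietoris: "topspace (vietoris X) = {K. K \<noteq> {} \<and> compactin X K}"
proof (rule set_eqI, rule iffI)
  fix K assume "K \<in> topspace (vietoris X)"
  then obtain B where "B \<in> {vietoris_basic X Us | Us. \<forall>U\<in>set Us. openin X U}" "K \<in> B"
    unfolding vietoris_def topology_generated_by_topspace by blast
  then show "K \<in> {K. K \<noteq> {} \<and> compactin X K}"
    by (auto simp: vietoris_basic_def)
next
  fix K assume "K \<in> {K. K \<noteq> {} \<and> compactin X K}"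
  then have "K \<in> vietoris_basic X [topspace X]"
    using compactin_subset_topspace by (fastforce simp: vietoris_basic_def)
  moreover have "vietoris_basic X [topspace X] \<in> {vietoris_basic X Us | Us. \<forall>U\<in>set Us. openin X U}"
    by auto
  ultimately show "K \<in> topspace (vietoris X)"
    unfolding vietoris_def topology_generated_by_topspace by blast
qed

lemma vietoris_basic_subset_topspace: "vietoris_basic X Us \<subseteq> topspace (vietoris X)"
  by (auto simp: topspace_vietoris vietoris_basic_def)

lemma vietoris_basic_upper: "vietoris_basic X [U] = {K \<in> topspace (vietoris X). K \<subseteq> U}"
  by (auto simp: vietoris_basic_def topspace_vietoris)

lemma vietoris_basic_lower:
  "vietoris_basic X [topspace X, U] = {K \<in> topspace (vietoris X). K \<inter> U \<noteq> {}}"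
  using compactin_subset_topspace by (fastforce simp: vietoris_basic_def topspace_vietoris)

lemma openin_vietoris_basic:
  "(\<And>U. U \<in> set Us \<Longrightarrow> openin X U) \<Longrightarrow> openin (vietoris X) (vietoris_basic X Us)"
  unfolding vietoris_def by (rule topology_generated_by_Basis) blast

lemma continuous_map_into_vietoris:
  assumes "\<And>z. z \<in> topspace Z \<Longrightarrow> F z \<noteq> {} \<and> compactin X (F z)"
    and "\<And>Us. \<forall>U\<in>set Us. openin X U \<Longrightarrow> openin Z {z \<in> topspace Z. F z \<in> vietoris_basic X Us}"
  shows "continuous_map Z (vietoris X) F"
  unfolding vietoris_def
proof (rule continuous_on_generated_topo)
  fix B assume "B \<in> {vietoris_basic X Us | Us. \<forall>U\<in>set Us. openin X U}"
  then obtain Us where "B = vietoris_basic X Us" "\<forall>U\<in>set Us. openin X U"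
    by blast
  moreover have "F -` B \<inter> topspace Z = {z \<in> topspace Z. F z \<in> B}"
    by blast
  ultimately show "openin Z (F -` B \<inter> topspace Z)"
    using assms(2) by presburger
next
  have "F ` topspace Z \<subseteq> topspace (vietoris X)"
    using assms(1) by (auto simp: topspace_vietoris)
  then show "F ` topspace Z \<subseteq> \<Union> {vietoris_basic X Us | Us. \<forall>U\<in>set Us. openin X U}"
    by (simp add: vietoris_def)
qed

lemma openin_subtopology_vietoris_locally:
  assumes "W \<subseteq> C"
    and "\<And>K. K \<in> W \<Longrightarrow> \<exists>Us. (\<forall>U\<in>set Us. openin X U) \<and>
           K \<in> vietoris_basic X Us \<and> vietoris_basic X Us \<inter> C \<subseteq> W"
  shows "openin (subtopology (vietoris X) C) W"
proof (subst openin_subopen, intro ballI)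
  fix K assume "K \<in> W"
  then obtain Us where Us: "\<forall>U\<in>set Us. openin X U" "K \<in> vietoris_basic X Us"
      "vietoris_basic X Us \<inter> C \<subseteq> W"
    using assms(2) by blast
  have "openin (subtopology (vietoris X) C) (vietoris_basic X Us \<inter> C)"
    using Us(1) by (simp add: openin_subtopology_Int openin_vietoris_basic)
  moreover have "K \<in> vietoris_basic X Us \<inter> C"
    using Us(2) \<open>K \<in> W\<close> assms(1) by blast
  ultimately show "\<exists>V. openin (subtopology (vietoris X) C) V \<and> K \<in> V \<and> V \<subseteq> W"
    using Us(3) by blast
qed

lemma closedin_vietoris_locally:
  assumes "C \<subseteq> topspace (vietoris X)"
    and "\<And>K. K \<in> topspace (vietoris X) \<Longrightarrow> K \<notin> C \<Longrightarrow> \<exists>Us. (\<forall>U\<in>set Us. openin X U) \<and>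
           K \<in> vietoris_basic X Us \<and> vietoris_basic X Us \<inter> C = {}"
  shows "closedin (vietoris X) C"
proof -
  have "openin (subtopology (vietoris X) (topspace (vietoris X))) (topspace (vietoris X) - C)"
  proof (rule openin_subtopology_vietoris_locally)
    fix K assume "K \<in> topspace (vietoris X) - C"
    then obtain Us where "\<forall>U\<in>set Us. openin X U" "K \<in> vietoris_basic X Us"
        "vietoris_basic X Us \<inter> C = {}"
      using assms(2) by blast
    moreover have "vietoris_basic X Us \<subseteq> topspace (vietoris X)"
      by (rule vietoris_basic_subset_topspace)
    ultimately show "\<exists>Us. (\<forall>U\<in>set Us. openin X U) \<and> K \<in> vietoris_basic X Us \<and>
        vietoris_basic X Us \<inter> topspace (vietoris X) \<subseteq> topspace (vietoris X) - C"
      by blast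
  qed simp
  then show ?thesis
    using assms(1) by (simp add: closedin_def)
qed

lemma continuous_map_vietoris_image:
  assumes f: "continuous_map X Y f"
  shows "continuous_map (vietoris X) (vietoris Y) (image f)"
proof (rule continuous_map_into_vietoris)
  show "f ` K \<noteq> {} \<and> compactin Y (f ` K)" if "K \<in> topspace (vietoris X)" for K
    using that image_compactin[OF _ f] by (auto simp: topspace_vietoris)
next
  fix Us assume Us: "\<forall>U\<in>set Us. openin Y U"
  let ?Vs = "map (\<lambda>U. {x \<in> topspace X. f x \<in> U}) Us"
  have "f ` K \<in> vietoris_basic Y Us \<longleftrightarrow> K \<in> vietoris_basic X ?Vs"
    if "K \<in> topspace (vietoris X)" for K
  proof -
    have K: "K \<noteq> {}" "compactin X K" "K \<subseteq> topspace X"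
      using that compactin_subset_topspace by (auto simp: topspace_vietoris)
    have "f ` K \<subseteq> \<Union> (set Us) \<longleftrightarrow> K \<subseteq> \<Union> (set ?Vs)"
      using K(3) by auto
    moreover have "(\<forall>U\<in>set Us. f ` K \<inter> U \<noteq> {}) \<longleftrightarrow> (\<forall>V\<in>set ?Vs. K \<inter> V \<noteq> {})"
      using K(3) by auto
    ultimately show ?thesis
      using K image_compactin[OF K(2) f] by (simp add: vietoris_basic_def)
  qed
  then have "{K \<in> topspace (vietoris X). f ` K \<in> vietoris_basic Y Us} = vietoris_basic X ?Vs"
    using vietoris_basic_subset_topspace by blast
  moreover have "openin (vietoris X) (vietoris_basic X ?Vs)"
    using Us openin_continuous_map_preimage[OF f] by (intro openin_vietoris_basic) auto
  ultimately show "openin (vietoris X) {K \<in> topspace (vietoris X). f ` K \<in> vietoris_basic Y Us}"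
    by simp
qed

lemma homeomorphic_map_vietoris_image:
  assumes "homeomorphic_map X Y f"
  shows "homeomorphic_map (vietoris X) (vietoris Y) (image f)"
proof -
  obtain g where g: "homeomorphic_maps X Y f g"
    using assms homeomorphic_map_maps by blast
  have "homeomorphic_maps (vietoris X) (vietoris Y) (image f) (image g)"
    unfolding homeomorphic_maps_def
  proof (intro conjI ballI)
    show "continuous_map (vietoris X) (vietoris Y) (image f)"
         "continuous_map (vietoris Y) (vietoris X) (image g)"
      using g continuous_map_vietoris_image by (auto simp: homeomorphic_maps_def)
    show "g ` f ` K = K" if "K \<in> topspace (vietoris X)" for K
    proof -
      have "K \<subseteq> topspace X"
        using that compactin_subset_topspace by (auto simp: topspace_vietoris)
      then have "\<forall>x\<in>K. g (f x) = x"
        using g by (auto simp: homeomorphic_maps_def)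
      then show ?thesis
        by (simp add: image_image)
    qed
    show "f ` g ` L = L" if "L \<in> topspace (vietoris Y)" for L
    proof -
      have "L \<subseteq> topspace Y"
        using that compactin_subset_topspace by (auto simp: topspace_vietoris)
      then have "\<forall>y\<in>L. f (g y) = y"
        using g by (auto simp: homeomorphic_maps_def)
      then show ?thesis
        by (simp add: image_image)
    qed
  qed
  then show ?thesis
    using homeomorphic_map_maps by blast
qed

lemma vietoris_subtopology:
  "vietoris (subtopology X S) = subtopology (vietoris X) {K \<in> topspace (vietoris X). K \<subseteq> S}"
    (is "_ = subtopology _ ?KS")
proof -
  have "continuous_map (vietoris (subtopology X S)) (subtopology (vietoris X) ?KS) id"
  proof -
    have "continuous_map (vietoris (subtopology X S)) (vietoris X) id"
      using continuous_map_vietoris_image[OF continuous_map_id_subt[of X S]] by simp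
    moreover have "id ` topspace (vietoris (subtopology X S)) \<subseteq> ?KS"
      by (auto simp: topspace_vietoris compactin_subtopology)
    ultimately show ?thesis
      by (simp only: continuous_map_in_subtopology image_subset_iff_funcset)
  qed
  moreover have "continuous_map (subtopology (vietoris X) ?KS) (vietoris (subtopology X S)) id"
  proof (rule continuous_map_into_vietoris)
    show "id K \<noteq> {} \<and> compactin (subtopology X S) (id K)"
      if "K \<in> topspace (subtopology (vietoris X) ?KS)" for K
      using that by (auto simp: topspace_vietoris compactin_subtopology)
  next
    fix Us assume Us: "\<forall>U\<in>set Us. openin (subtopology X S) U"
    define lift where "lift U = (SOME V. openin X V \<and> U = S \<inter> V)" for U
    have lift: "openin X (lift U) \<and> U = S \<inter> lift U" if U: "U \<in> set Us" for U
    proof -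
      obtain V where "openin X V" "U = V \<inter> S"
        using Us U by (auto simp: openin_subtopology)
      then have "\<exists>V. openin X V \<and> U = S \<inter> V"
        by blast
      then show ?thesis
        unfolding lift_def by (rule someI_ex)
    qed
    have "K \<in> vietoris_basic (subtopology X S) Us \<longleftrightarrow> K \<in> vietoris_basic X (map lift Us)"
      if K: "K \<in> ?KS" for K
    proof -
      have KU: "x \<in> U \<longleftrightarrow> x \<in> lift U" if "U \<in> set Us" "x \<in> K" for U x
        using K lift[OF that(1)] that(2) by blast
      then have "K \<subseteq> \<Union> (set Us) \<longleftrightarrow> K \<subseteq> \<Union> (set (map lift Us))"
        by (simp add: subset_iff)
      moreover have "(\<forall>U\<in>set Us. K \<inter> U \<noteq> {}) \<longleftrightarrow> (\<forall>U\<in>set Us. K \<inter> lift U \<noteq> {})"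
        using KU by blast
      ultimately show ?thesis
        using K by (simp add: vietoris_basic_def topspace_vietoris compactin_subtopology)
    qed
    then have "{K \<in> topspace (subtopology (vietoris X) ?KS). id K \<in> vietoris_basic (subtopology X S) Us}
        = ?KS \<inter> vietoris_basic X (map lift Us)"
      by auto
    moreover have "openin (vietoris X) (vietoris_basic X (map lift Us))"
      using lift by (intro openin_vietoris_basic) auto
    ultimately show "openin (subtopology (vietoris X) ?KS)
        {K \<in> topspace (subtopology (vietoris X) ?KS). id K \<in> vietoris_basic (subtopology X S) Us}"
      by (simp add: openin_subtopology_Int2)
  qed
  ultimately have "homeomorphic_maps (vietoris (subtopology X S)) (subtopology (vietoris X) ?KS) id id"
    by (simp add: homeomorphic_maps_def)
  then show ?thesis
    by (metis homeomorphic_map_id homeomorphic_map_maps)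
qed

lemma closedin_vietoris_subsets:
  assumes "closedin X S"
  shows "closedin (vietoris X) {K \<in> topspace (vietoris X). K \<subseteq> S}"
proof -
  have "K \<in> vietoris_basic X [topspace X, topspace X - S] \<longleftrightarrow>
      K \<in> topspace (vietoris X) \<and> \<not> K \<subseteq> S" for K
    using compactin_subset_topspace[of X K] by (auto simp: vietoris_basic_def topspace_vietoris)
  then have "topspace (vietoris X) - {K \<in> topspace (vietoris X). K \<subseteq> S}
      = vietoris_basic X [topspace X, topspace X - S]"
    by blast
  moreover have "openin (vietoris X) (vietoris_basic X [topspace X, topspace X - S])"
    using assms by (intro openin_vietoris_basic) auto
  ultimately show ?thesis
    by (simp add: closedin_def)
qed

lemma closed_hyperspace_copy_from_closed_subspace:
  assumes "closedin X S" and "Y homeomorphic_space subtopology X S"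
    and "closedin (vietoris Y) C"
  shows "\<exists>C'. closedin (vietoris X) C' \<and>
    subtopology (vietoris X) C' homeomorphic_space subtopology (vietoris Y) C"
proof -
  define KS where "KS = {K \<in> topspace (vietoris X). K \<subseteq> S}"
  obtain f where "homeomorphic_map Y (subtopology X S) f"
    using assms(2) homeomorphic_space by blast
  then have "homeomorphic_map (vietoris Y) (vietoris (subtopology X S)) (image f)"
    by (rule homeomorphic_map_vietoris_image)
  then have hom: "homeomorphic_map (vietoris Y) (subtopology (vietoris X) KS) (image f)"
    by (simp only: KS_def vietoris_subtopology)
  have C: "C \<subseteq> topspace (vietoris Y)"
    using assms(3) closedin_subset by blast
  have "closedin (subtopology (vietoris X) KS) (image f ` C)"
    using homeomorphic_map_closedness[OF hom C] assms(3) by blast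
  then have closed: "closedin (vietoris X) (image f ` C)"
    using closedin_trans_full closedin_vietoris_subsets[OF assms(1)] KS_def by blast
  have fC: "image f ` C \<subseteq> topspace (subtopology (vietoris X) KS)"
    using homeomorphic_imp_surjective_map[OF hom] C by auto
  then have "image f ` (topspace (vietoris Y) \<inter> C)
      = topspace (subtopology (vietoris X) KS) \<inter> image f ` C"
    using C by blast
  then have "homeomorphic_map (subtopology (vietoris Y) C)
      (subtopology (subtopology (vietoris X) KS) (image f ` C)) (image f)"
    by (rule homeomorphic_map_subtopologies[OF hom])
  moreover have "KS \<inter> image f ` C = image f ` C"
    using fC by auto
  ultimately have "homeomorphic_map (subtopology (vietoris Y) C)
      (subtopology (vietoris X) (image f ` C)) (image f)"
    by (simp add: subtopology_subtopology)
  then show ?thesis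
    using closed homeomorphic_map_imp_homeomorphic_space homeomorphic_space_sym by blast
qed

lemma closedin_vietoris_one_point_extensions:
  assumes "t1_space X" and "T \<subseteq> topspace X"
    and isolated: "\<And>x. x \<in> topspace X - T \<Longrightarrow> openin X {x}"
  shows "closedin (vietoris X)
    {K \<in> topspace (vietoris X). T \<subseteq> K \<and> (\<forall>x\<in>K - T. \<forall>y\<in>K - T. x = y)}"
    (is "closedin _ ?C")
proof (rule closedin_vietoris_locally)
  fix K assume K: "K \<in> topspace (vietoris X)" "K \<notin> ?C"
  then have KX: "K \<subseteq> topspace X" "K \<noteq> {}"
    using compactin_subset_topspace by (auto simp: topspace_vietoris)
  consider t where "t \<in> T" "t \<notin> K" | x y where "x \<in> K - T" "y \<in> K - T" "x \<noteq> y"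
    using K by blast
  then show "\<exists>Us. (\<forall>U\<in>set Us. openin X U) \<and> K \<in> vietoris_basic X Us \<and> vietoris_basic X Us \<inter> ?C = {}"
  proof cases
    case 1
    have "closedin X {t}"
      using closedin_t1_singleton[OF assms(1)] assms(2) \<open>t \<in> T\<close> by blast
    then have "openin X (topspace X - {t})"
      by (simp add: openin_diff)
    moreover have "K \<in> vietoris_basic X [topspace X - {t}]"
      using K(1) KX \<open>t \<notin> K\<close> by (auto simp: vietoris_basic_upper)
    moreover have "vietoris_basic X [topspace X - {t}] \<inter> ?C = {}"
      using \<open>t \<in> T\<close> by (auto simp: vietoris_basic_upper)
    ultimately show ?thesis
      by (intro exI[of _ "[topspace X - {t}]"]) auto
  next
    case 2
    have "openin X {x}" "openin X {y}"
      using 2 KX(1) by (auto intro: isolated)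
    moreover have "K \<in> vietoris_basic X [topspace X, {x}, {y}]"
      using K(1) KX 2 by (auto simp: vietoris_basic_def topspace_vietoris)
    moreover have "vietoris_basic X [topspace X, {x}, {y}] \<inter> ?C = {}"
      using 2 by (fastforce simp: vietoris_basic_def)
    ultimately show ?thesis
      by (intro exI[of _ "[topspace X, {x}, {y}]"]) auto
  qed
qed auto

section \<open>A sequential fan in the hyperspace of the Arens space\<close>

lemma openin_arens_space:
  "openin arens_space U \<longleftrightarrow>
    (\<forall>n. Some (n, None) \<in> U \<longrightarrow> eventually (\<lambda>m. Some (n, Some m) \<in> U) sequentially) \<and>
    (None \<in> U \<longrightarrow> eventually (\<lambda>n. Some (n, None) \<in> U) sequentially)"
proof -
  have "istopology (\<lambda>U.
      (\<forall>n. Some (n, None) \<in> U \<longrightarrow> eventually (\<lambda>m. Some (n, Some m) \<in> U) sequentially) \<and>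
      (None \<in> U \<longrightarrow> eventually (\<lambda>n. Some (n, None) \<in> U) sequentially))"
    unfolding istopology_def
    apply (intro conjI)
    subgoal by (auto intro: eventually_conj)
    apply (intro allI impI conjI)
    subgoal for K n by (smt (verit) UnionE UnionI eventually_mono)
    subgoal for K by (smt (verit) UnionE UnionI eventually_mono)
    done
  then show ?thesis
    unfolding arens_space_def by (subst topology_inverse'[OF \<open>istopology _\<close>]) (rule refl)
qed

lemma openin_seq_fan:
  "openin seq_fan U \<longleftrightarrow> (None \<in> U \<longrightarrow> (\<forall>n. eventually (\<lambda>m. Some (n, m) \<in> U) sequentially))"
proof -
  have "istopology (\<lambda>U. None \<in> U \<longrightarrow> (\<forall>n. eventually (\<lambda>m. Some (n, m) \<in> U) sequentially))"
    unfolding istopology_def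
    apply (intro conjI)
    subgoal by (auto intro: eventually_conj)
    apply (intro allI impI)
    subgoal for K n by (smt (verit) UnionE UnionI eventually_mono)
    done
  then show ?thesis
    unfolding seq_fan_def by (subst topology_inverse'[OF \<open>istopology _\<close>]) (rule refl)
qed

lemma topspace_arens_space [simp]: "topspace arens_space = UNIV"
  using openin_subset[of arens_space UNIV] by (auto simp: openin_arens_space)

lemma topspace_seq_fan [simp]: "topspace seq_fan = UNIV"
  using openin_subset[of seq_fan UNIV] by (auto simp: openin_seq_fan)

lemma limitin_arens_space_spine: "limitin arens_space (\<lambda>n. Some (n, None)) None sequentially"
  unfolding limitin_def by (auto simp: openin_arens_space)

lemma limitin_arens_space_column:
  "limitin arens_space (\<lambda>m. Some (n, Some m)) (Some (n, None)) sequentially"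
  unfolding limitin_def by (auto simp: openin_arens_space)

lemma openin_arens_space_isolated: "openin arens_space {Some (n, Some m)}"
  by (simp add: openin_arens_space)

lemma eventually_sequentially_inj_neq: "inj f \<Longrightarrow> eventually (\<lambda>m. f m \<noteq> c) sequentially"
  using finite_vimageI[of "{c}" f]
  by (simp add: vimage_def eventually_cofinite flip: cofinite_eq_sequentially)

lemma t1_space_arens_space: "t1_space arens_space"
proof -
  have "openin arens_space (- {p})" for p
    using eventually_sequentially_inj_neq[of "\<lambda>m. Some (_, Some m)" p]
      eventually_sequentially_inj_neq[of "\<lambda>n. Some (n, None)" p]
    by (auto simp: openin_arens_space inj_def)
  then show ?thesis
    by (simp add: t1_space_closedin_singleton closedin_def Compl_eq_Diff_UNIV)
qed

lemma closedin_arens_space_finite_columns: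
  "closedin arens_space {Some (n, Some m) | n m. m < G n}"
proof -
  have "eventually (\<lambda>m. \<not> m < G n) sequentially" for n
    by (rule eventually_sequentiallyI[of "G n"]) simp
  moreover have "eventually (\<lambda>n. True) sequentially"
    by simp
  ultimately show ?thesis
    unfolding closedin_def openin_arens_space by (auto elim: eventually_mono)
qed

definition arens_spine :: "(nat \<times> nat option) option set" where
  "arens_spine = insert None (range (\<lambda>n. Some (n, None)))"

lemma notin_arens_spine_iff: "x \<notin> arens_spine \<longleftrightarrow> (\<exists>n m. x = Some (n, Some m))"
  by (cases x) (auto simp: arens_spine_def)

lemma compactin_arens_spine: "compactin arens_space arens_spine"
  unfolding arens_spine_def by (rule compactin_sequence_with_limit[OF limitin_arens_space_spine]) auto

definition arens_fan_map :: "(nat \<times> nat) option \<Rightarrow> (nat \<times> nat option) option set" where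
  "arens_fan_map x =
    (case x of None \<Rightarrow> arens_spine | Some (n, m) \<Rightarrow> insert (Some (n, Some m)) arens_spine)"

lemma arens_spine_subset_fan_map: "arens_spine \<subseteq> arens_fan_map x"
  by (auto simp: arens_fan_map_def split: option.splits)

lemma isolated_point_in_arens_fan_map_iff:
  "Some (n, Some m) \<in> arens_fan_map x \<longleftrightarrow> x = Some (n, m)"
  by (auto simp: arens_fan_map_def arens_spine_def split: option.splits)

lemma arens_fan_map_in_vietoris: "arens_fan_map x \<in> topspace (vietoris arens_space)"
proof -
  have "compactin arens_space ({p} \<union> arens_spine)" for p
    by (intro compactin_Un compactin_arens_spine) simp
  moreover have "arens_spine \<noteq> {}"
    by (simp add: arens_spine_def)
  ultimately show ?thesis
    using compactin_arens_spine
    by (auto simp: arens_fan_map_def topspace_vietoris split: option.splits)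
qed

lemma inj_arens_fan_map: "inj arens_fan_map"
proof (rule injI)
  fix x y assume eq: "arens_fan_map x = arens_fan_map y"
  have "x = Some (n, m) \<longleftrightarrow> y = Some (n, m)" for n m
    using eq isolated_point_in_arens_fan_map_iff by metis
  then show "x = y"
    by (cases x; cases y) auto
qed

lemma range_arens_fan_map:
  "range arens_fan_map = {K \<in> topspace (vietoris arens_space).
     arens_spine \<subseteq> K \<and> (\<forall>x\<in>K - arens_spine. \<forall>y\<in>K - arens_spine. x = y)}"
    (is "_ = ?C")
proof
  show "range arens_fan_map \<subseteq> ?C"
    using arens_fan_map_in_vietoris arens_spine_subset_fan_map
    by (auto simp: arens_fan_map_def split: option.splits)
next
  show "?C \<subseteq> range arens_fan_map"
  proof
    fix K assume K: "K \<in> ?C"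
    then have spine: "arens_spine \<subseteq> K"
      and unique: "\<forall>x\<in>K - arens_spine. \<forall>y\<in>K - arens_spine. x = y"
      by simp_all
    show "K \<in> range arens_fan_map"
    proof (cases "K = arens_spine")
      case True
      then show ?thesis
        by (metis arens_fan_map_def option.simps(4) rangeI)
    next
      case False
      then obtain d where d: "d \<in> K" "d \<notin> arens_spine"
        using spine by blast
      then obtain n m where "d = Some (n, Some m)"
        using notin_arens_spine_iff by blast
      moreover have "K = insert d arens_spine"
        using spine unique d by blast
      ultimately have "K = arens_fan_map (Some (n, m))"
        by (simp add: arens_fan_map_def)
      then show ?thesis
        by blast
    qed
  qed
qed

lemma closedin_range_arens_fan_map: "closedin (vietoris arens_space) (range arens_fan_map)"
  unfolding range_arens_fan_map
  by (rule closedin_vietoris_one_point_extensions)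
    (auto simp: t1_space_arens_space notin_arens_spine_iff openin_arens_space_isolated)

lemma continuous_map_arens_fan_map: "continuous_map seq_fan (vietoris arens_space) arens_fan_map"
proof (rule continuous_map_into_vietoris)
  show "arens_fan_map z \<noteq> {} \<and> compactin arens_space (arens_fan_map z)" for z
    using arens_fan_map_in_vietoris by (simp add: topspace_vietoris)
next
  fix Us assume Us: "\<forall>U\<in>set Us. openin arens_space U"
  have "eventually (\<lambda>m. arens_fan_map (Some (n, m)) \<in> vietoris_basic arens_space Us) sequentially"
    if spine: "arens_spine \<in> vietoris_basic arens_space Us" for n
  proof -
    obtain U where U: "U \<in> set Us" "Some (n, None) \<in> U"
      using spine by (auto simp: vietoris_basic_def arens_spine_def)
    then have "eventually (\<lambda>m. Some (n, Some m) \<in> U) sequentially"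
      using Us limitin_arens_space_column[of n] by (simp add: limitin_def)
    then show ?thesis
    proof (rule eventually_mono)
      fix m assume "Some (n, Some m) \<in> U"
      then show "arens_fan_map (Some (n, m)) \<in> vietoris_basic arens_space Us"
        using spine U(1) arens_fan_map_in_vietoris[of "Some (n, m)"]
        by (auto simp: vietoris_basic_def arens_fan_map_def topspace_vietoris)
    qed
  qed
  then show "openin seq_fan {z \<in> topspace seq_fan. arens_fan_map z \<in> vietoris_basic arens_space Us}"
    by (simp add: openin_seq_fan arens_fan_map_def)
qed

lemma vietoris_basic_isolated_inter_range_arens_fan_map:
  "vietoris_basic arens_space [UNIV, {Some (n, Some m)}] \<inter> range arens_fan_map
    = {arens_fan_map (Some (n, m))}"
  using vietoris_basic_lower[of arens_space] isolated_point_in_arens_fan_map_iff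
    arens_fan_map_in_vietoris
  by auto

lemma vietoris_basic_avoiding_columns_inter_range_arens_fan_map:
  "vietoris_basic arens_space [UNIV - {Some (n, Some m) | n m. m < G n}] \<inter> range arens_fan_map
    = arens_fan_map ` insert None {Some (n, m) | n m. G n \<le> m}"
proof -
  have "arens_fan_map z \<subseteq> UNIV - {Some (n, Some m) | n m. m < G n} \<longleftrightarrow>
      z \<in> insert None {Some (n, m) | n m. G n \<le> m}" for z
  proof -
    have "arens_fan_map z \<subseteq> UNIV - {Some (n, Some m) | n m. m < G n} \<longleftrightarrow>
        (\<forall>n m. Some (n, Some m) \<in> arens_fan_map z \<longrightarrow> G n \<le> m)"
      by (auto simp: not_less) (meson not_le)
    also have "\<dots> \<longleftrightarrow> z \<in> insert None {Some (n, m) | n m. G n \<le> m}"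
      using isolated_point_in_arens_fan_map_iff by (cases z) auto
    finally show ?thesis .
  qed
  then show ?thesis
    using vietoris_basic_upper[of arens_space] arens_fan_map_in_vietoris by auto
qed

lemma open_map_arens_fan_map:
  "open_map seq_fan (subtopology (vietoris arens_space) (range arens_fan_map)) arens_fan_map"
  unfolding open_map_def
proof (intro allI impI)
  fix W assume W: "openin seq_fan W"
  show "openin (subtopology (vietoris arens_space) (range arens_fan_map)) (arens_fan_map ` W)"
  proof (rule openin_subtopology_vietoris_locally)
    fix K assume "K \<in> arens_fan_map ` W"
    then obtain x where x: "x \<in> W" "K = arens_fan_map x"
      by blast
    show "\<exists>Us. (\<forall>U\<in>set Us. openin arens_space U) \<and> K \<in> vietoris_basic arens_space Us \<and>
        vietoris_basic arens_space Us \<inter> range arens_fan_map \<subseteq> arens_fan_map ` W"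
    proof (cases x)
      case None
      then have "\<forall>n. \<exists>N. \<forall>m\<ge>N. Some (n, m) \<in> W"
        using W x by (simp add: openin_seq_fan eventually_sequentially)
      then obtain G where G: "\<And>n m. G n \<le> m \<Longrightarrow> Some (n, m) \<in> W"
        by metis
      let ?E = "{Some (n, Some m) | n m. m < G n}"
      have eq: "vietoris_basic arens_space [UNIV - ?E] \<inter> range arens_fan_map
          = arens_fan_map ` insert None {Some (n, m) | n m. G n \<le> m}"
        by (rule vietoris_basic_avoiding_columns_inter_range_arens_fan_map)
      have "openin arens_space (UNIV - ?E)"
        using closedin_arens_space_finite_columns[of G] by (simp add: closedin_def)
      moreover have "K \<in> vietoris_basic arens_space [UNIV - ?E]"
        using eq x(2) None by blast
      moreover have "vietoris_basic arens_space [UNIV - ?E] \<inter> range arens_fan_map \<subseteq> arens_fan_map ` W"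
        unfolding eq using G None x(1) by (intro image_mono) auto
      ultimately show ?thesis
        by (intro exI[of _ "[UNIV - ?E]"]) auto
    next
      case (Some a)
      then obtain n m where nm: "x = Some (n, m)"
        by (cases a) blast
      let ?Us = "[UNIV, {Some (n, Some m)}]"
      have "vietoris_basic arens_space ?Us \<inter> range arens_fan_map = {K}"
        using x(2) nm vietoris_basic_isolated_inter_range_arens_fan_map by simp
      moreover have "openin arens_space UNIV"
        using openin_topspace[of arens_space] by simp
      ultimately show ?thesis
        using x openin_arens_space_isolated by (intro exI[of _ ?Us]) auto
    qed
  qed blast
qed

lemma homeomorphic_map_arens_fan_map:
  "homeomorphic_map seq_fan (subtopology (vietoris arens_space) (range arens_fan_map)) arens_fan_map"
proof (rule bijective_open_imp_homeomorphic_map)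
  show "continuous_map seq_fan (subtopology (vietoris arens_space) (range arens_fan_map)) arens_fan_map"
    using continuous_map_arens_fan_map by (simp add: continuous_map_in_subtopology)
  show "arens_fan_map ` topspace seq_fan
      = topspace (subtopology (vietoris arens_space) (range arens_fan_map))"
    using arens_fan_map_in_vietoris by auto
qed (simp_all add: open_map_arens_fan_map inj_arens_fan_map)

theorem proposition3p10:
  fixes X :: "'a topology"
  assumes "regular_space X" and "Hausdorff_space X"
    and "\<exists>S. closedin X S \<and> subtopology X S homeomorphic_space arens_space"
  shows "\<exists>C. closedin (vietoris X) C \<and> subtopology (vietoris X) C homeomorphic_space seq_fan"
proof -
  obtain S where S: "closedin X S" "arens_space homeomorphic_space subtopology X S"
    using assms(3) homeomorphic_space_sym by blast
  obtain C where "closedin (vietoris X) C"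
    and "subtopology (vietoris X) C homeomorphic_space
         subtopology (vietoris arens_space) (range arens_fan_map)"
    using closed_hyperspace_copy_from_closed_subspace[OF S closedin_range_arens_fan_map] by blast
  moreover have "subtopology (vietoris arens_space) (range arens_fan_map) homeomorphic_space seq_fan"
    using homeomorphic_map_arens_fan_map homeomorphic_map_imp_homeomorphic_space
      homeomorphic_space_sym by blast
  ultimately show ?thesis
    using homeomorphic_space_trans by blast
qed

end
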